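(* Let $0<p<q<\infty$. Then there does not exist any continuous map $\tau:\mathbb{R}\to\mathbb{R}$ such that for some constant $C>0$, \[ |\tau^{-1}(E)|^{1/q}\le C|E|^{1/p} \] for all Lebesgue measurable sets $E\subset\mathbb{R}$.
   Context: $|\cdot|$ denotes Lebesgue measure on $\mathbb{R}$. *)

theory Defs
  imports "HOL-Analysis.Analysis"
begin

definition leb_outer :: "real set \<Rightarrow> ennreal" where
  "leb_outer A = (INF B \<in> {B \<in> sets lebesgue. A \<subseteq> B}. emeasure lebesgue B)"

text \<open>Real power of an extended nonnegative real, with \<infinity>^a = \<infinity> (used for a > 0).\<close>
definition epowr :: "ennreal \<Rightarrow> real \<Rightarrow> ennreal" where
  "epowr x a = (if x = top then top else ennreal (enn2real x powr a))"

end

theory Submission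
  imports Defs
begin

text \<open>Suppose \<open>\<tau>\<close> were such a map. Testing the inequality on intervals gives
  \<open>|\<tau>\<^sup>-\<^sup>1[a,b]| \<le> C\<^sup>q (b - a)\<^bsup>q/p\<^esup>\<close> with \<open>q/p > 1\<close>. Splitting \<open>[a,b]\<close> into \<open>N\<close> equal
  pieces yields \<open>|\<tau>\<^sup>-\<^sup>1[a,b]| \<le> C\<^sup>q (b - a)\<^bsup>q/p\<^esup> N\<^bsup>1-q/p\<^esup> \<rightarrow> 0\<close>, so the preimage of every
  bounded interval is null. But \<open>\<real>\<close> is the countable union of the preimages
  \<open>\<tau>\<^sup>-\<^sup>1[-n,n]\<close>, and it is not null. Continuity of \<open>\<tau>\<close> is only needed to make these
  preimages measurable.\<close>

lemma leb_outer_eq_emeasure: "A \<in> sets lebesgue \<Longrightarrow> leb_outer A = emeasure lebesgue A"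
  unfolding leb_outer_def
  by (rule antisym) (auto intro!: INF_lower INF_greatest emeasure_mono simp del: emeasure_completion)

lemma vimage_in_sets_lebesgue:
  "f \<in> borel_measurable lebesgue \<Longrightarrow> S \<in> sets borel \<Longrightarrow> f -` S \<in> sets lebesgue"
  using measurable_sets[of f lebesgue borel S] by simp

lemma le_powr_if_epowr_inverse_le:
  assumes "epowr x (1 / q) \<le> ennreal y" and "q > 0"
  shows "x \<le> ennreal (y powr q)"
proof -
  have "x \<noteq> top"
    using assms(1) by (auto simp: epowr_def top_unique)
  then obtain m where m: "x = ennreal m" "m \<ge> 0"
    by (cases x) auto
  show ?thesis
  proof (cases "y \<ge> 0")
    case True
    have "m powr (1 / q) \<le> y"
      using assms(1) m True by (simp add: epowr_def)
    then have "(m powr (1 / q)) powr q \<le> y powr q"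
      using \<open>q > 0\<close> by (intro powr_mono2) auto
    then show ?thesis
      using m \<open>q > 0\<close> by (simp add: powr_powr)
  next
    case False
    then have "m powr (1 / q) = 0"
      using assms(1) m by (simp add: epowr_def ennreal_neg)
    then show ?thesis
      using m by simp
  qed
qed

lemma atLeastAtMost_eq_UN_equal_pieces:
  fixes a h :: real
  assumes "h \<ge> 0"
  shows "{a .. a + real (Suc n) * h} = (\<Union>k\<le>n. {a + real k * h .. a + real (Suc k) * h})"
proof (induction n)
  case 0
  show ?case by simp
next
  case (Suc n)
  have "{a .. a + real (Suc (Suc n)) * h}
          = {a .. a + real (Suc n) * h} \<union> {a + real (Suc n) * h .. a + real (Suc (Suc n)) * h}"
    using assms by (intro ivl_disj_un_two_touch(4)[symmetric]) (auto simp: algebra_simps)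
  then show ?case
    using Suc.IH by (simp add: atMost_Suc Un_commute)
qed

lemma emeasure_vimage_Icc_eq_0_if_superlinear_bound:
  fixes f :: "real \<Rightarrow> real" and K r a b :: real
  assumes f: "f \<in> borel_measurable lebesgue" and "r > 1"
    and bound: "\<And>a b. a \<le> b \<Longrightarrow> emeasure lebesgue (f -` {a..b}) \<le> ennreal (K * (b - a) powr r)"
    and "a \<le> b"
  shows "emeasure lebesgue (f -` {a..b}) = 0"
proof -
  have pieces: "emeasure lebesgue (f -` {a..b})
                  \<le> ennreal (K * (b - a) powr r * real (Suc n) powr (1 - r))" for n
  proof -
    define h where "h = (b - a) / real (Suc n)"
    have "h \<ge> 0"
      using \<open>a \<le> b\<close> by (simp add: h_def)
    have "{a..b} = {a .. a + real (Suc n) * h}"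
      by (simp add: h_def)
    then have "f -` {a..b} = (\<Union>k\<le>n. f -` {a + real k * h .. a + real (Suc k) * h})"
      by (simp only: atLeastAtMost_eq_UN_equal_pieces[OF \<open>h \<ge> 0\<close>] vimage_UN)
    also have "emeasure lebesgue \<dots>
                 \<le> (\<Sum>k\<le>n. emeasure lebesgue (f -` {a + real k * h .. a + real (Suc k) * h}))"
      using vimage_in_sets_lebesgue[OF f] by (intro emeasure_subadditive_finite) auto
    also have "\<dots> \<le> (\<Sum>k\<le>n. ennreal (K * h powr r))"
    proof (rule sum_mono)
      fix k
      have "a + real k * h \<le> a + real (Suc k) * h"
        using \<open>h \<ge> 0\<close> by (simp add: algebra_simps)
      then have "emeasure lebesgue (f -` {a + real k * h .. a + real (Suc k) * h})
                   \<le> ennreal (K * ((a + real (Suc k) * h) - (a + real k * h)) powr r)"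
        by (rule bound)
      also have "(a + real (Suc k) * h) - (a + real k * h) = h"
        by (simp add: algebra_simps)
      finally show "emeasure lebesgue (f -` {a + real k * h .. a + real (Suc k) * h})
                      \<le> ennreal (K * h powr r)" .
    qed
    also have "\<dots> = ennreal (real (Suc n) * (K * h powr r))"
      by (simp add: ennreal_mult' ennreal_of_nat_eq_real_of_nat)
    also have "real (Suc n) * (K * h powr r) = K * (b - a) powr r * real (Suc n) powr (1 - r)"
      using \<open>a \<le> b\<close> by (simp add: h_def powr_divide powr_diff field_simps)
    finally show ?thesis .
  qed
  have "(\<lambda>n. K * (b - a) powr r * real (Suc n) powr (1 - r)) \<longlonglongrightarrow> K * (b - a) powr r * 0"
    using \<open>r > 1\<close>
    by (intro tendsto_mult tendsto_const tendsto_neg_powr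
          filterlim_compose[OF filterlim_real_sequentially] filterlim_Suc) auto
  then have "(\<lambda>n. ennreal (K * (b - a) powr r * real (Suc n) powr (1 - r))) \<longlonglongrightarrow> 0"
    by (metis ennreal_0 mult_zero_right tendsto_ennrealI)
  then have "emeasure lebesgue (f -` {a..b}) \<le> 0"
    using pieces by (intro tendsto_le[OF trivial_limit_sequentially _ tendsto_const]) auto
  then show ?thesis
    by simp
qed

lemma ex_emeasure_vimage_Icc_neq_0:
  fixes f :: "real \<Rightarrow> real"
  assumes f: "f \<in> borel_measurable lebesgue"
  shows "\<exists>n::nat. emeasure lebesgue (f -` {- real n .. real n}) \<noteq> 0"
proof (rule ccontr)
  assume "\<not> ?thesis"
  then have null: "(\<Union>n. f -` {- real n .. real n}) \<in> null_sets lebesgue"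
    using vimage_in_sets_lebesgue[OF f] by (intro null_sets_UN null_setsI) auto
  have cover: "UNIV \<subseteq> (\<Union>n. f -` {- real n .. real n})"
  proof
    fix x
    obtain n where "\<bar>f x\<bar> \<le> real n"
      using real_arch_simple by blast
    then show "x \<in> (\<Union>n. f -` {- real n .. real n})"
      by (intro UN_I[of n]) (auto simp: abs_le_iff)
  qed
  have "emeasure lebesgue (UNIV :: real set) \<le> emeasure lebesgue (\<Union>n. f -` {- real n .. real n})"
    using null by (intro emeasure_mono[OF cover]) auto
  then show False
    using null by (simp add: null_setsD1)
qed

lemma emeasure_vimage_Icc_le_if_epowr_bound:
  fixes f :: "real \<Rightarrow> real" and p q C a b :: real
  assumes f: "f \<in> borel_measurable lebesgue" and "q > 0" and "C \<ge> 0" and "a \<le> b"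
    and bound: "epowr (leb_outer (f -` {a..b})) (1 / q)
                  \<le> ennreal C * epowr (emeasure lebesgue {a..b}) (1 / p)"
  shows "emeasure lebesgue (f -` {a..b}) \<le> ennreal (C powr q * (b - a) powr (q / p))"
proof -
  have "f -` {a..b} \<in> sets lebesgue"
    using vimage_in_sets_lebesgue[OF f] by simp
  then have "epowr (emeasure lebesgue (f -` {a..b})) (1 / q)
               \<le> ennreal C * epowr (ennreal (b - a)) (1 / p)"
    using bound \<open>a \<le> b\<close> by (simp add: leb_outer_eq_emeasure)
  also have "\<dots> = ennreal (C * (b - a) powr (1 / p))"
    using \<open>C \<ge> 0\<close> \<open>a \<le> b\<close> by (simp add: epowr_def ennreal_mult)
  finally have "emeasure lebesgue (f -` {a..b}) \<le> ennreal ((C * (b - a) powr (1 / p)) powr q)"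
    using \<open>q > 0\<close> by (rule le_powr_if_epowr_inverse_le)
  also have "(C * (b - a) powr (1 / p)) powr q = C powr q * (b - a) powr (q / p)"
    using \<open>C \<ge> 0\<close> \<open>a \<le> b\<close> by (simp add: powr_mult powr_powr)
  finally show ?thesis .
qed

theorem proposition5p1:
  fixes p q :: real
  assumes "0 < p" and "p < q"
  shows "\<not> (\<exists>\<tau> :: real \<Rightarrow> real. continuous_on UNIV \<tau> \<and>
            (\<exists>C :: real. C > 0 \<and>
               (\<forall>E \<in> sets lebesgue.
                  epowr (leb_outer (\<tau> -` E)) (1 / q)
                    \<le> ennreal C * epowr (emeasure lebesgue E) (1 / p))))"
proof (intro notI, elim exE conjE)
  fix \<tau> :: "real \<Rightarrow> real" and C :: real
  assume "continuous_on UNIV \<tau>" and "C > 0" and H: "\<forall>E \<in> sets lebesgue.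
    epowr (leb_outer (\<tau> -` E)) (1 / q) \<le> ennreal C * epowr (emeasure lebesgue E) (1 / p)"
  have \<tau>: "\<tau> \<in> borel_measurable lebesgue"
    using borel_measurable_continuous_onI[OF \<open>continuous_on UNIV \<tau>\<close>]
    by (intro measurable_completion) simp
  have "emeasure lebesgue (\<tau> -` {a..b}) \<le> ennreal (C powr q * (b - a) powr (q / p))"
    if "a \<le> b" for a b
    using assms \<open>C > 0\<close> \<open>a \<le> b\<close>
    by (intro emeasure_vimage_Icc_le_if_epowr_bound[OF \<tau> _ _ _ H[rule_format]]) auto
  then have "emeasure lebesgue (\<tau> -` {a..b}) = 0" if "a \<le> b" for a b
    using assms \<open>a \<le> b\<close>
    by (intro emeasure_vimage_Icc_eq_0_if_superlinear_bound[OF \<tau>]) auto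
  then show False
    using ex_emeasure_vimage_Icc_neq_0[OF \<tau>] by auto
qed

end
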